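(* Let $(S,K,I)$ be a split graph with $|I|\ge2$ and $K=\bigcup_{v\in I}N_S(v)$. If $\Phi(S)$ is simple and connected, then $S$ is homogeneous.
   Context: All graphs are finite and simple. A split graph is a graph $S$ whose vertex set is a disjoint union $V(S)=K\,\dot\cup\,I$ with $K$ a clique and $I$ an independent set; $(K,I)$ is called a bipartition of $S$, and $(S,K,I)$ denotes $S$ together with this fixed bipartition. For a split graph $(S,K,I)$ and distinct $u,v\in I$, $\sigma_{uv}(S)$ is the number of induced subgraphs of $S$ isomorphic to $P_4$ containing both $u$ and $v$. The factor graph $\Phi(S)$ is the loopless multigraph with vertex set $I$ having exactly $\sigma_{uv}(S)$ parallel edges between $u$ and $v$; it is simple if $\sigma_{uv}(S)\in\{0,1\}$ for all $u,v$. Graph notions (connected, complete, clique, etc.) applied to $\Phi(S)$ refer to its underlying simple graph, in which $u\sim v$ iff $\sigma_{uv}(S)\ge1$. A vertex $w$ of $(S,K,I)$ is swing if $N_S(w)=K\setminus\{w\}$. $(S,K,I)$ is balanced if $|K|=\omega(S)$ and $|I|=\alpha(S)$; it is known that $S$ is balanced iff it has no swing vertex. $(S,K,I)$ is homogeneous if it is balanced and all vertices of $I$ have the same degree in $S$. *)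

theory Defs
  imports Main
begin

definition simple_graph :: "'a set \<Rightarrow> ('a \<Rightarrow> 'a \<Rightarrow> bool) \<Rightarrow> bool" where
  "simple_graph V E \<longleftrightarrow> finite V \<and> (\<forall>x y. E x y \<longrightarrow> E y x) \<and> (\<forall>x. \<not> E x x)
      \<and> (\<forall>x y. E x y \<longrightarrow> x \<in> V \<and> y \<in> V)"

definition nbhd :: "'a set \<Rightarrow> ('a \<Rightarrow> 'a \<Rightarrow> bool) \<Rightarrow> 'a \<Rightarrow> 'a set" where
  "nbhd V E v = {w \<in> V. E v w}"

definition degree :: "'a set \<Rightarrow> ('a \<Rightarrow> 'a \<Rightarrow> bool) \<Rightarrow> 'a \<Rightarrow> nat" where
  "degree V E v = card (nbhd V E v)"

definition is_clique :: "('a \<Rightarrow> 'a \<Rightarrow> bool) \<Rightarrow> 'a set \<Rightarrow> bool" where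
  "is_clique E C \<longleftrightarrow> (\<forall>x\<in>C. \<forall>y\<in>C. x \<noteq> y \<longrightarrow> E x y)"

definition is_indep :: "('a \<Rightarrow> 'a \<Rightarrow> bool) \<Rightarrow> 'a set \<Rightarrow> bool" where
  "is_indep E A \<longleftrightarrow> (\<forall>x\<in>A. \<forall>y\<in>A. \<not> E x y)"

definition clique_number :: "'a set \<Rightarrow> ('a \<Rightarrow> 'a \<Rightarrow> bool) \<Rightarrow> nat" where
  "clique_number V E = Max {card C | C. C \<subseteq> V \<and> is_clique E C}"

definition indep_number :: "'a set \<Rightarrow> ('a \<Rightarrow> 'a \<Rightarrow> bool) \<Rightarrow> nat" where
  "indep_number V E = Max {card A | A. A \<subseteq> V \<and> is_indep E A}"

definition split_graph :: "'a set \<Rightarrow> ('a \<Rightarrow> 'a \<Rightarrow> bool) \<Rightarrow> 'a set \<Rightarrow> 'a set \<Rightarrow> bool" where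
  "split_graph V E K I \<longleftrightarrow> simple_graph V E \<and> V = K \<union> I \<and> K \<inter> I = {}
      \<and> is_clique E K \<and> is_indep E I"

definition induces_P4 :: "('a \<Rightarrow> 'a \<Rightarrow> bool) \<Rightarrow> 'a set \<Rightarrow> bool" where
  "induces_P4 E X \<longleftrightarrow> (\<exists>f. bij_betw f {0::nat..<4} X \<and>
      (\<forall>i<4. \<forall>j<4. E (f i) (f j) \<longleftrightarrow> (i = j + 1 \<or> j = i + 1)))"

definition sigma :: "'a set \<Rightarrow> ('a \<Rightarrow> 'a \<Rightarrow> bool) \<Rightarrow> 'a \<Rightarrow> 'a \<Rightarrow> nat" where
  "sigma V E u v = card {X. X \<subseteq> V \<and> u \<in> X \<and> v \<in> X \<and> induces_P4 E X}"

text \<open>Underlying simple graph of the factor graph Phi(S), on vertex set I.\<close>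
definition factor_adj :: "'a set \<Rightarrow> ('a \<Rightarrow> 'a \<Rightarrow> bool) \<Rightarrow> 'a set \<Rightarrow> 'a \<Rightarrow> 'a \<Rightarrow> bool" where
  "factor_adj V E I u v \<longleftrightarrow> u \<in> I \<and> v \<in> I \<and> u \<noteq> v \<and> sigma V E u v \<ge> 1"

definition factor_simple :: "'a set \<Rightarrow> ('a \<Rightarrow> 'a \<Rightarrow> bool) \<Rightarrow> 'a set \<Rightarrow> bool" where
  "factor_simple V E I \<longleftrightarrow> (\<forall>u\<in>I. \<forall>v\<in>I. u \<noteq> v \<longrightarrow> sigma V E u v \<le> 1)"

definition factor_connected :: "'a set \<Rightarrow> ('a \<Rightarrow> 'a \<Rightarrow> bool) \<Rightarrow> 'a set \<Rightarrow> bool" where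
  "factor_connected V E I \<longleftrightarrow> I \<noteq> {} \<and>
      (\<forall>u\<in>I. \<forall>v\<in>I. (u, v) \<in> {(x, y). factor_adj V E I x y}\<^sup>*)"

definition balanced :: "'a set \<Rightarrow> ('a \<Rightarrow> 'a \<Rightarrow> bool) \<Rightarrow> 'a set \<Rightarrow> 'a set \<Rightarrow> bool" where
  "balanced V E K I \<longleftrightarrow> card K = clique_number V E \<and> card I = indep_number V E"

definition homogeneous :: "'a set \<Rightarrow> ('a \<Rightarrow> 'a \<Rightarrow> bool) \<Rightarrow> 'a set \<Rightarrow> 'a set \<Rightarrow> bool" where
  "homogeneous V E K I \<longleftrightarrow> balanced V E K I \<and>
      (\<forall>u\<in>I. \<forall>v\<in>I. degree V E u = degree V E v)"

end

theory Submission
  imports Defs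
begin

text \<open>In a split graph an induced P4 through two vertices u, v of I must be u-b-c-v with
  b in N(u) - N(v) and c in N(v) - N(u); hence sigma_uv = |N(u) - N(v)| * |N(v) - N(u)|.
  So an edge of a simple factor graph forces both differences to be singletons: its ends have
  equal degree and each misses a vertex of K. Connectivity spreads the degree over all of I and,
  as |I| >= 2, gives every vertex of I a neighbour in the factor graph, so no vertex of I is swing.
  No vertex of K is swing either, since each has a neighbour in I; and without swing vertices
  K is a maximum clique and I a maximum independent set.\<close>

lemma split_graphD:
  assumes "split_graph V E K I"
  shows "finite V" "E x y \<Longrightarrow> E y x" "\<not> E x x" "E x y \<Longrightarrow> x \<in> V \<and> y \<in> V"
    "V = K \<union> I" "K \<inter> I = {}"
    "x \<in> K \<Longrightarrow> y \<in> K \<Longrightarrow> x \<noteq> y \<Longrightarrow> E x y" "x \<in> I \<Longrightarrow> y \<in> I \<Longrightarrow> \<not> E x y"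
  using assms unfolding split_graph_def simple_graph_def is_clique_def is_indep_def
  by blast+

lemma split_graph_nbhd_subset:
  assumes "split_graph V E K I" "w \<in> I"
  shows "nbhd V E w \<subseteq> K"
  using split_graphD[OF assms(1)] assms(2) unfolding nbhd_def by blast

lemma induces_P4_split_graphD:
  assumes sg: "split_graph V E K I" and P4: "induces_P4 E X"
    and "u \<in> X" "v \<in> X" "u \<in> I" "v \<in> I" "u \<noteq> v"
  shows "\<exists>b c. X = {u, b, c, v} \<and> b \<in> nbhd V E u - nbhd V E v \<and> c \<in> nbhd V E v - nbhd V E u"
proof -
  note F = split_graphD[OF sg]
  obtain f where bij: "bij_betw f {0::nat..<4} X"
    and adj: "\<And>i j. i < 4 \<Longrightarrow> j < 4 \<Longrightarrow> E (f i) (f j) \<longleftrightarrow> (i = j + 1 \<or> j = i + 1)"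
    using P4 unfolding induces_P4_def by blast
  have X: "X = {f 0, f 1, f 2, f 3}"
    using bij_betw_imp_surj_on[OF bij] by (auto simp: atLeast0LessThan lessThan_nat_numeral)
  have distinct: "f i \<noteq> f j" if "i < 4" "j < 4" "i \<noteq> j" for i j
    using bij_betw_imp_inj_on[OF bij] that by (auto dest: inj_onD)
  have inV: "f i \<in> V" if "i < 4" for i
    using adj[of i "Suc i"] adj[of 3 2] that F(4) by (cases "i = 3") auto
  text \<open>An inner vertex of the path has two distinct non-adjacent neighbours,
    so it cannot lie in I, whose neighbourhoods lie in the clique K.\<close>
  have notI: "f i \<notin> I" if "i = 1 \<or> i = 2" for i
  proof
    assume "f i \<in> I"
    moreover have "f (i - 1) \<in> nbhd V E (f i)" "f (i + 1) \<in> nbhd V E (f i)"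
      using adj[of i "i - 1"] adj[of i "i + 1"] inV that unfolding nbhd_def by auto
    ultimately have "f (i - 1) \<in> K" "f (i + 1) \<in> K"
      using split_graph_nbhd_subset[OF sg] by blast+
    then show False
      using F(7) distinct[of "i - 1" "i + 1"] adj[of "i - 1" "i + 1"] that by auto
  qed
  have inner: "f 1 \<in> K" "f 2 \<in> K"
    using inV[of 1] inV[of 2] notI[of 1] notI[of 2] F(5) by auto
  then have "(u = f 0 \<and> v = f 3) \<or> (u = f 3 \<and> v = f 0)"
    using assms(3-7) X F(6) by auto
  then show ?thesis
  proof
    assume "u = f 0 \<and> v = f 3"
    then show ?thesis
      using X adj[of 0 1] adj[of 3 1] adj[of 3 2] adj[of 0 2] inner F(5)
      unfolding nbhd_def by (intro exI[of _ "f 1"] exI[of _ "f 2"]) auto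
  next
    assume "u = f 3 \<and> v = f 0"
    then show ?thesis
      using X adj[of 0 1] adj[of 3 1] adj[of 3 2] adj[of 0 2] inner F(5)
      unfolding nbhd_def by (intro exI[of _ "f 2"] exI[of _ "f 1"]) auto
  qed
qed

lemma induces_P4_split_graphI:
  assumes sg: "split_graph V E K I" and "u \<in> I" "v \<in> I"
    and b: "b \<in> nbhd V E u - nbhd V E v" and c: "c \<in> nbhd V E v - nbhd V E u"
  shows "induces_P4 E {u, b, c, v}"
proof -
  note F = split_graphD[OF sg]
  have K: "b \<in> K" "c \<in> K"
    using b c split_graph_nbhd_subset[OF sg] assms(2,3) by blast+
  have "E u b" "\<not> E v b" "E v c" "\<not> E u c"
    using b c unfolding nbhd_def by auto
  moreover have distinct: "u \<noteq> b" "u \<noteq> c" "u \<noteq> v" "b \<noteq> c" "b \<noteq> v" "c \<noteq> v"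
    using calculation K assms(2,3) F(3,6) by auto
  ultimately have adj: "E u b" "E b c" "E c v" "\<not> E u c" "\<not> E b v" "\<not> E u v"
    using K assms(2,3) F(2,7,8) by auto
  define f :: "nat \<Rightarrow> 'a" where "f = (\<lambda>i. [u, b, c, v] ! i)"
  have "{0::nat..<4} = {0, 1, 2, 3}" by auto
  then have "bij_betw f {0..<4} {u, b, c, v}"
    using distinct unfolding bij_betw_def inj_on_def f_def by auto
  moreover have "E (f i) (f j) \<longleftrightarrow> (i = j + 1 \<or> j = i + 1)" if "i < 4" "j < 4" for i j
    using that adj F(2,3) unfolding f_def
    by (auto simp: less_Suc_eq numeral_eq_Suc)
  ultimately show ?thesis
    unfolding induces_P4_def by blast
qed

lemma sigma_split_graph:
  assumes sg: "split_graph V E K I" and "u \<in> I" "v \<in> I" "u \<noteq> v"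
  shows "sigma V E u v = card (nbhd V E u - nbhd V E v) * card (nbhd V E v - nbhd V E u)"
proof -
  note F = split_graphD[OF sg]
  let ?B = "nbhd V E u - nbhd V E v" and ?C = "nbhd V E v - nbhd V E u"
  let ?path = "\<lambda>(b, c). {u, b, c, v}"
  have P4s: "{X. X \<subseteq> V \<and> u \<in> X \<and> v \<in> X \<and> induces_P4 E X} = ?path ` (?B \<times> ?C)"
  proof (intro equalityI subsetI)
    fix X assume "X \<in> {X. X \<subseteq> V \<and> u \<in> X \<and> v \<in> X \<and> induces_P4 E X}"
    then show "X \<in> ?path ` (?B \<times> ?C)"
      using induces_P4_split_graphD[OF sg] assms(2-4) by fastforce
  next
    fix X assume "X \<in> ?path ` (?B \<times> ?C)"
    then show "X \<in> {X. X \<subseteq> V \<and> u \<in> X \<and> v \<in> X \<and> induces_P4 E X}"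
      using induces_P4_split_graphI[OF sg] assms F(5) unfolding nbhd_def by auto
  qed
  have "b = b' \<and> c = c'"
    if "b \<in> ?B" "c \<in> ?C" "b' \<in> ?B" "c' \<in> ?C" and eq: "{u, b, c, v} = {u, b', c', v}"
    for b c b' c'
  proof -
    have "E u b" "\<not> E u c" "E u b'" "\<not> E u c'" "E v c" "\<not> E v b" "E v c'" "\<not> E v b'"
      using that(1-4) unfolding nbhd_def by auto
    text \<open>Adjacency to u and to v tells the two inner vertices apart.\<close>
    with eq show ?thesis
      using assms(2,3) F(3,8) by (metis insert_iff singletonD)
  qed
  then have "inj_on ?path (?B \<times> ?C)"
    unfolding inj_on_def by auto
  then show ?thesis
    unfolding sigma_def P4s by (simp add: card_image card_cartesian_product)
qed

lemma card_eq_if_card_Diff_eq: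
  assumes "finite A" "finite B" "card (A - B) = card (B - A)"
  shows "card A = card B"
  using card_Int_Diff[OF assms(1), of B] card_Int_Diff[OF assms(2), of A] assms(3)
  by (simp add: Int_commute)

lemma factor_adj_nbhd_Diff_singletons:
  assumes sg: "split_graph V E K I" and "factor_simple V E I" and "factor_adj V E I u v"
  obtains b c where "nbhd V E u - nbhd V E v = {b}" "nbhd V E v - nbhd V E u = {c}"
proof -
  have "u \<in> I" "v \<in> I" "u \<noteq> v" "sigma V E u v = 1"
    using assms(2,3) unfolding factor_adj_def factor_simple_def by (auto intro: antisym)
  then have "card (nbhd V E u - nbhd V E v) = 1" "card (nbhd V E v - nbhd V E u) = 1"
    using sigma_split_graph[OF sg] by auto
  then show thesis
    using that by (auto simp: card_1_singleton_iff)
qed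

lemma factor_adj_degree_eq:
  assumes "split_graph V E K I" "factor_simple V E I" "factor_adj V E I u v"
  shows "degree V E u = degree V E v"
proof -
  obtain b c where "nbhd V E u - nbhd V E v = {b}" "nbhd V E v - nbhd V E u = {c}"
    using factor_adj_nbhd_Diff_singletons[OF assms] .
  moreover have "finite (nbhd V E w)" for w
    using split_graphD(1)[OF assms(1)] unfolding nbhd_def by simp
  ultimately show ?thesis
    unfolding degree_def by (simp add: card_eq_if_card_Diff_eq)
qed

definition swing :: "'a set \<Rightarrow> ('a \<Rightarrow> 'a \<Rightarrow> bool) \<Rightarrow> 'a set \<Rightarrow> 'a \<Rightarrow> bool" where
  "swing V E K w \<longleftrightarrow> nbhd V E w = K - {w}"

lemma factor_adj_not_swing:
  assumes "split_graph V E K I" "factor_simple V E I" "factor_adj V E I u v"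
  shows "\<not> swing V E K u"
proof -
  obtain c where "c \<in> nbhd V E v - nbhd V E u"
    using factor_adj_nbhd_Diff_singletons[OF assms] by blast
  moreover have "u \<in> I" "v \<in> I"
    using assms(3) unfolding factor_adj_def by simp_all
  ultimately have "c \<in> K - nbhd V E u" "c \<noteq> u"
    using split_graph_nbhd_subset[OF assms(1)] split_graphD(6)[OF assms(1)] by auto
  then show ?thesis
    unfolding swing_def by blast
qed

lemma not_swing_if_adj_indep:
  assumes "split_graph V E K I" "v \<in> I" "E v w"
  shows "\<not> swing V E K w"
proof -
  have "v \<in> nbhd V E w - K"
    using assms split_graphD(2,4,6)[OF assms(1)] unfolding nbhd_def by auto
  then show ?thesis
    unfolding swing_def by blast
qed

lemma Max_card_subsets_eqI:
  assumes "finite V" "A \<subseteq> V" "P A" "\<And>C. C \<subseteq> V \<Longrightarrow> P C \<Longrightarrow> card C \<le> card A"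
  shows "Max {card C | C. C \<subseteq> V \<and> P C} = card A"
proof (rule Max_eqI)
  have "{card C | C. C \<subseteq> V \<and> P C} \<subseteq> card ` Pow V"
    by auto
  then show "finite {card C | C. C \<subseteq> V \<and> P C}"
    using assms(1) by (simp add: finite_subset)
qed (use assms in auto)

lemma clique_number_split_graph:
  assumes sg: "split_graph V E K I" and no_swing: "\<forall>w\<in>I. \<not> swing V E K w"
  shows "clique_number V E = card K"
  unfolding clique_number_def
proof (rule Max_card_subsets_eqI)
  note F = split_graphD[OF sg]
  show "finite V" "K \<subseteq> V" "is_clique E K"
    using sg unfolding split_graph_def simple_graph_def by auto
  fix C assume C: "C \<subseteq> V" "is_clique E C"
  have "finite K" "finite C"
    using F(1,5) C(1) finite_subset by auto
  show "card C \<le> card K"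
  proof (cases "C \<subseteq> K")
    case True
    then show ?thesis by (simp add: \<open>finite K\<close> card_mono)
  next
    case False
    then obtain w where w: "w \<in> C" "w \<in> I"
      using C(1) F(5) by auto
    have "C - {w} \<subseteq> nbhd V E w"
      using C w unfolding is_clique_def nbhd_def by auto
    moreover have "nbhd V E w \<subset> K"
      using split_graph_nbhd_subset[OF sg w(2)] no_swing w(2) F(6)
      unfolding swing_def by auto
    ultimately have "card (C - {w}) < card K"
      using \<open>finite K\<close> by (meson psubset_card_mono subset_psubset_trans card_mono le_less_trans)
    then show ?thesis
      using w(1) \<open>finite C\<close> by (simp add: card_Diff_singleton)
  qed
qed

lemma indep_number_split_graph:
  assumes sg: "split_graph V E K I" and no_swing: "\<forall>w\<in>K. \<not> swing V E K w"
  shows "indep_number V E = card I"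
  unfolding indep_number_def
proof (rule Max_card_subsets_eqI)
  note F = split_graphD[OF sg]
  show "finite V" "I \<subseteq> V" "is_indep E I"
    using sg unfolding split_graph_def simple_graph_def by auto
  fix A assume A: "A \<subseteq> V" "is_indep E A"
  have "finite I" "finite A"
    using F(1,5) A(1) finite_subset by auto
  show "card A \<le> card I"
  proof (cases "A \<subseteq> I")
    case True
    then show ?thesis by (simp add: \<open>finite I\<close> card_mono)
  next
    case False
    then obtain k where k: "k \<in> A" "k \<in> K"
      using A(1) F(5) by auto
    have "K - {k} \<subseteq> nbhd V E k"
      using k(2) F(5,7) unfolding nbhd_def by auto
    then obtain x where x: "x \<in> nbhd V E k" "x \<notin> K - {k}"
      using no_swing k(2) unfolding swing_def by blast
    then have "x \<in> I" "E k x"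
      using F(3,5) unfolding nbhd_def by auto
    have "A - {k} \<subseteq> I - {x}"
    proof
      fix y assume y: "y \<in> A - {k}"
      then have "\<not> E k y"
        using A(2) k(1) unfolding is_indep_def by blast
      then show "y \<in> I - {x}"
        using y A(1) k(2) \<open>E k x\<close> F(5,7) by blast
    qed
    then have "card (A - {k}) \<le> card (I - {x})"
      using \<open>finite I\<close> by (simp add: card_mono)
    moreover note card.remove[OF \<open>finite A\<close> k(1)] card.remove[OF \<open>finite I\<close> \<open>x \<in> I\<close>]
    ultimately show ?thesis
      by simp
  qed
qed

lemma balanced_if_no_swing:
  assumes "split_graph V E K I" "\<forall>w\<in>V. \<not> swing V E K w"
  shows "balanced V E K I"
proof -
  have "\<forall>w\<in>K. \<not> swing V E K w" "\<forall>w\<in>I. \<not> swing V E K w"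
    using assms(2) split_graphD(5)[OF assms(1)] by auto
  then show ?thesis
    unfolding balanced_def
    using clique_number_split_graph[OF assms(1)] indep_number_split_graph[OF assms(1)] by simp
qed

lemma factor_connected_degree_eq:
  assumes sg: "split_graph V E K I" and fs: "factor_simple V E I"
    and "factor_connected V E I" "u \<in> I" "v \<in> I"
  shows "degree V E u = degree V E v"
proof -
  have "(u, v) \<in> {(x, y). factor_adj V E I x y}\<^sup>*"
    using assms(3-5) unfolding factor_connected_def by blast
  then show ?thesis
  proof (induction rule: rtrancl_induct)
    case (step y z)
    then show ?case
      using factor_adj_degree_eq[OF sg fs, of y z] by simp
  qed simp
qed

lemma factor_connected_ex_factor_adj:
  assumes "factor_connected V E I" "card I \<ge> 2" "u \<in> I"
  obtains v where "factor_adj V E I u v"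
proof -
  have "\<not> I \<subseteq> {u}"
    using card_mono[of "{u}" I] assms(2) by auto
  then obtain w where "w \<in> I" "w \<noteq> u"
    by blast
  then have "(u, w) \<in> {(x, y). factor_adj V E I x y}\<^sup>*"
    using assms(1,3) unfolding factor_connected_def by blast
  then show thesis
    using \<open>w \<noteq> u\<close> that by (cases rule: converse_rtranclE) auto
qed

theorem theorem3p3:
  fixes V :: "'a set" and E :: "'a \<Rightarrow> 'a \<Rightarrow> bool" and K I :: "'a set"
  assumes "split_graph V E K I"
    and "card I \<ge> 2"
    and "K = (\<Union>v\<in>I. nbhd V E v)"
    and "factor_simple V E I"
    and "factor_connected V E I"
  shows "homogeneous V E K I"
proof -
  have "\<not> swing V E K w" if "w \<in> V" for w
  proof (cases "w \<in> I")
    case True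
    then obtain v where "factor_adj V E I w v"
      using factor_connected_ex_factor_adj[OF assms(5,2)] by blast
    then show ?thesis
      using factor_adj_not_swing[OF assms(1,4)] by blast
  next
    case False
    then have "w \<in> K"
      using that split_graphD(5)[OF assms(1)] by blast
    then obtain v where "v \<in> I" "E v w"
      using assms(3) unfolding nbhd_def by blast
    then show ?thesis
      using not_swing_if_adj_indep[OF assms(1)] by blast
  qed
  then show ?thesis
    unfolding homogeneous_def
    using balanced_if_no_swing[OF assms(1)] factor_connected_degree_eq[OF assms(1,4,5)] by blast
qed

end
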